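(* Let $c,h\in\mathbb{N}$ with $c>2(h+1)$, let $\ell=c2^h+1$, let $n\ge\ell$, and let $\underline{\eta}=(\eta_1<\dots<\eta_s)$ be positive integer thresholds whose largest threshold is $\eta_s=2^{h-1}+2$. Then there exists a $c\times n$ binary matrix $\mathbf{R}$, depending only on $n$, $h$, $c$ (hence only on $n,\ell$ and $\eta_s$, not on the other thresholds), such that for all $i,j\in\{0,\dots,n-\ell\}$ with $0<|i-j|<2\ell$, $\underline{\eta}(\mathbf{R}\mathbf{b}_i)\neq\underline{\eta}(\mathbf{R}\mathbf{b}_j)$. (Note $c\approx\ell/(2\eta_s)$.)
   Context: Items are indexed $0,\dots,n-1$; $\mathbf{b}_i\in\{0,1\}^n$ is the burst of length $\ell$ with head $i$ (coordinates $i,\dots,i+\ell-1$ equal to $1$). The SQGT outcome of a nonnegative integer $y$ is $\underline{\eta}(y)=|\{k:\eta_k\le y\}|$, applied entrywise to vectors. *)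

theory Defs
  imports Main
begin

definition burst :: "nat \<Rightarrow> nat \<Rightarrow> nat \<Rightarrow> nat \<Rightarrow> nat" where
  "burst n l i k = (if i \<le> k \<and> k < i + l \<and> k < n then 1 else 0)"

definition matvec :: "nat \<Rightarrow> nat \<Rightarrow> (nat \<Rightarrow> nat \<Rightarrow> nat) \<Rightarrow> (nat \<Rightarrow> nat) \<Rightarrow> nat list" where
  "matvec c n R x = map (\<lambda>r. \<Sum>k<n. R r k * x k) [0..<c]"

definition sqgt :: "nat list \<Rightarrow> nat \<Rightarrow> nat" where
  "sqgt eta y = card {k. k < length eta \<and> eta ! k \<le> y}"

definition sqgt_vec :: "nat list \<Rightarrow> nat list \<Rightarrow> nat list" where
  "sqgt_vec eta ys = map (sqgt eta) ys"

end

theory Submission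
  imports Defs
begin

text \<open>Let \<open>L = c 2^h + 1\<close> and \<open>V = 2^(h-1) + 1\<close>, one below the largest threshold. We build
  \<open>R\<close> so that every row sums to \<open>V\<close> or \<open>V + 1\<close> over every window of length \<open>L\<close>; the SQGT
  outcome of a row then reveals one bit. For burst head \<open>i\<close> the rows carrying a one form the
  \<open>i\<close>-th entry of a sequence of \<open>2L\<close> distinct subsets of the rows, repeated with period \<open>2L\<close>:
  the empty set followed by the \<open>c\<close> cyclic rotations of the reflected Gray code on \<open>h\<close> bits
  (each word enlarged by the element \<open>h\<close>), and then the complements of these \<open>L\<close> sets.
  The first \<open>L\<close> sets have at most \<open>h + 1 < c/2\<close> elements, so none is the complement of
  another, and heads closer than \<open>2L\<close> get different subsets, hence different outcomes.

  A row can follow an antiperiodic bit sequence \<open>b\<close> with its window sums if the 0/1 row \<open>s\<close>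
  solves \<open>s (i + L) - s i = b (i + 1) - b i\<close> with the right first window; this is possible when
  \<open>b\<close> drops from one to zero at most \<open>V\<close> times per period. The Gray code contributes
  \<open>2^(h-1) - 1\<close> such drops to each row, and the joins between rotated copies at most two more.\<close>

section \<open>Descents of a predicate along a list\<close>

fun descents :: "('a \<Rightarrow> bool) \<Rightarrow> 'a list \<Rightarrow> nat" where
  "descents p (x # y # zs) = of_bool (p x \<and> \<not> p y) + descents p (y # zs)"
| "descents p _ = 0"

lemma descents_append:
  "xs \<noteq> [] \<Longrightarrow> ys \<noteq> [] \<Longrightarrow>
    descents p (xs @ ys) = descents p xs + of_bool (p (last xs) \<and> \<not> p (hd ys)) + descents p ys"
  by (induction p xs rule: descents.induct) (auto simp: neq_Nil_conv)

lemma descents_rev: "descents p (rev xs) = descents (\<lambda>x. \<not> p x) xs"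
proof (induction p xs rule: descents.induct)
  case (1 p x y zs)
  then show ?case
    using descents_append[of "rev (y # zs)" "[x]" p] by (simp add: last_rev)
qed auto

lemma descents_map: "descents p (map f xs) = descents (p \<circ> f) xs"
  by (induction "p \<circ> f" xs rule: descents.induct) auto

lemma descents_cong: "(\<And>x. x \<in> set xs \<Longrightarrow> p x = q x) \<Longrightarrow> descents p xs = descents q xs"
  by (induction p xs rule: descents.induct) auto

lemma descents_const [simp]: "descents (\<lambda>_. b) xs = 0"
  by (induction "\<lambda>_::'a. b" xs rule: descents.induct) auto

lemma descents_conv_card:
  "descents p xs = card {y. Suc y < length xs \<and> p (xs ! y) \<and> \<not> p (xs ! Suc y)}"
proof (induction p xs rule: descents.induct)
  case (1 p x y zs)
  let ?S = "\<lambda>xs. {k. Suc k < length xs \<and> p (xs ! k) \<and> \<not> p (xs ! Suc k)}"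
  have split: "?S (x # y # zs) = {k. k = 0 \<and> p x \<and> \<not> p y} \<union> Suc ` ?S (y # zs)"
  proof (rule set_eqI)
    fix k show "k \<in> ?S (x # y # zs) \<longleftrightarrow> k \<in> {k. k = 0 \<and> p x \<and> \<not> p y} \<union> Suc ` ?S (y # zs)"
      by (cases k) auto
  qed
  have "card (?S (x # y # zs)) = of_bool (p x \<and> \<not> p y) + card (?S (y # zs))"
    unfolding split by (subst card_Un_disjoint) (auto simp: card_image)
  then show ?case by (simp only: descents.simps 1)
qed auto

section \<open>The reflected Gray code\<close>

fun gray_code :: "nat \<Rightarrow> nat set list" where
  "gray_code 0 = [{}]"
| "gray_code (Suc n) = gray_code n @ map (insert n) (rev (gray_code n))"

lemma gray_code_not_Nil [simp]: "gray_code n \<noteq> []"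
  by (induction n) auto

lemma length_gray_code [simp]: "length (gray_code n) = 2 ^ n"
  by (induction n) auto

lemma gray_code_subset: "A \<in> set (gray_code n) \<Longrightarrow> A \<subseteq> {..<n}"
  by (induction n arbitrary: A) (fastforce simp: less_Suc_eq)+

lemma hd_gray_code [simp]: "hd (gray_code n) = {}"
  by (induction n) auto

lemma last_gray_code: "last (gray_code (Suc n)) = {n}"
  by (cases n) (auto simp: last_map last_rev)

lemma distinct_gray_code: "distinct (gray_code n)"
proof (induction n)
  case (Suc n)
  have "inj_on (insert n) (set (gray_code n))"
    using gray_code_subset by (force simp: inj_on_def)
  moreover have "set (gray_code n) \<inter> insert n ` set (gray_code n) = {}"
    using gray_code_subset by fastforce
  ultimately show ?case using Suc by (simp add: distinct_map)
qed simp

definition bit_flips :: "nat \<Rightarrow> nat \<Rightarrow> nat" where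
  "bit_flips n j = descents (\<lambda>A. j \<in> A) (gray_code n) + descents (\<lambda>A. j \<notin> A) (gray_code n)"

lemma descents_gray_code_Suc:
  assumes "j < n"
  shows "descents (\<lambda>A. (j \<in> A) = v) (gray_code (Suc n)) = bit_flips n j"
proof -
  let ?g = "gray_code n"
  have "descents (\<lambda>A. (j \<in> A) = v) (map (insert n) (rev ?g)) = descents (\<lambda>A. (j \<in> A) \<noteq> v) ?g"
    unfolding descents_map descents_rev using assms by (intro descents_cong) auto
  moreover have "hd (map (insert n) (rev ?g)) = insert n (last ?g)"
    by (simp add: hd_map hd_rev)
  ultimately show ?thesis
    using assms by (cases v) (simp_all add: descents_append bit_flips_def)
qed

lemma bit_flips_Suc: "j < n \<Longrightarrow> bit_flips (Suc n) j = 2 * bit_flips n j"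
  using descents_gray_code_Suc[of j n True] descents_gray_code_Suc[of j n False]
  by (simp add: bit_flips_def)

lemma descents_gray_code_top:
  "descents (\<lambda>A. (n \<in> A) = v) (gray_code (Suc n)) = of_bool (\<not> v)"
proof -
  let ?g = "gray_code n"
  have "descents (\<lambda>A. (n \<in> A) = v) ?g = descents (\<lambda>_. \<not> v) ?g"
    using gray_code_subset by (intro descents_cong) blast
  moreover have "descents (\<lambda>A. (n \<in> A) = v) (map (insert n) (rev ?g)) = descents (\<lambda>_. v) (rev ?g)"
    by (simp add: descents_map comp_def)
  moreover have "n \<notin> last ?g"
    using gray_code_subset[of "last ?g" n] by auto
  ultimately show ?thesis
    by (simp add: descents_append hd_map hd_rev)
qed

lemma sum_bit_flips: "(\<Sum>j<n. bit_flips n j) = 2 ^ n - 1"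
proof (induction n)
  case (Suc n)
  have "bit_flips (Suc n) n = 1"
    using descents_gray_code_top[of n True] descents_gray_code_top[of n False]
    by (simp add: bit_flips_def)
  then have "(\<Sum>j<Suc n. bit_flips (Suc n) j) = 2 * (\<Sum>j<n. bit_flips n j) + 1"
    by (simp add: bit_flips_Suc sum_distrib_left)
  then show ?case
    using Suc by (cases "(2::nat) ^ n") simp_all
qed simp

lemma sum_descents_gray_code: "(\<Sum>j<n. descents (\<lambda>A. j \<in> A) (gray_code n)) = 2 ^ (n - 1) - 1"
proof (cases n)
  case (Suc m)
  have "(\<Sum>j<Suc m. descents (\<lambda>A. j \<in> A) (gray_code (Suc m))) = (\<Sum>j<m. bit_flips m j)"
    using descents_gray_code_Suc[of _ m True] descents_gray_code_top[of m True] by simp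
  then show ?thesis
    using Suc sum_bit_flips by simp
qed simp

section \<open>Cyclic rotations of sets\<close>

lemma mod_add_cancel_less:
  fixes a b c t :: nat
  assumes eq: "(a + t) mod c = (b + t) mod c" and "a < c" "b < c"
  shows "a = b"
proof -
  have "x = y" if "(x + t) mod c = (y + t) mod c" "x \<le> y" "y < c" for x y :: nat
  proof -
    have "c dvd (y + t) - (x + t)"
      using that mod_eq_dvd_iff_nat[of "x + t" "y + t" c] by simp
    then have "c dvd y - x" by simp
    show "x = y"
    proof (rule ccontr)
      assume "x \<noteq> y"
      then have "0 < y - x" "y - x < c" using that by auto
      then show False using \<open>c dvd y - x\<close> nat_dvd_not_less by blast
    qed
  qed
  then show ?thesis using assms by (metis nat_le_linear)
qed

definition rotate_set :: "nat \<Rightarrow> nat \<Rightarrow> nat set \<Rightarrow> nat set" where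
  "rotate_set c u B = (\<lambda>b. (b + u) mod c) ` B"

lemma rotate_eq_iff:
  fixes b c r u :: nat
  assumes "b < c" "r < c" "u < c"
  shows "(b + u) mod c = r \<longleftrightarrow> b = (r + c - u) mod c"
proof -
  have "((r + c - u) mod c + u) mod c = (r + c - u + u) mod c"
    by (rule mod_add_left_eq)
  also have "\<dots> = r" using assms by simp
  finally have round_trip: "((r + c - u) mod c + u) mod c = r" .
  show ?thesis
  proof
    assume "(b + u) mod c = r"
    then show "b = (r + c - u) mod c"
      using round_trip assms by (intro mod_add_cancel_less[of b u c]) auto
  qed (use round_trip in simp)
qed

lemma mem_rotate_set_iff:
  assumes "B \<subseteq> {..<c}" "r < c" "u < c"
  shows "r \<in> rotate_set c u B \<longleftrightarrow> (r + c - u) mod c \<in> B"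
proof -
  have "r \<in> rotate_set c u B \<longleftrightarrow> (\<exists>b\<in>B. (b + u) mod c = r)"
    unfolding rotate_set_def by auto
  also have "\<dots> \<longleftrightarrow> (\<exists>b\<in>B. b = (r + c - u) mod c)"
    using assms rotate_eq_iff[of _ c r u] by (intro bex_cong) auto
  finally show ?thesis by simp
qed

lemma rotate_set_subset: "0 < c \<Longrightarrow> rotate_set c u B \<subseteq> {..<c}"
  unfolding rotate_set_def by auto

lemma top_mem_rotate_set: "(h + u) mod c \<in> rotate_set c u (insert h A)"
  unfolding rotate_set_def by simp

text \<open>When \<open>2 * h < c\<close>, the image of \<open>h\<close> is the only element of the rotated set
  followed by \<open>h\<close> cyclically consecutive non-members.\<close>

lemma rotate_set_gap_after_top:
  assumes "2 * h < c" "A \<subseteq> {..<h}" "1 \<le> d" "d \<le> h"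
  shows "((h + u) mod c + d) mod c \<notin> rotate_set c u (insert h A)"
proof
  assume "((h + u) mod c + d) mod c \<in> rotate_set c u (insert h A)"
  then obtain b where b: "b \<in> insert h A" "((h + u) mod c + d) mod c = (b + u) mod c"
    unfolding rotate_set_def by auto
  have "((h + u) mod c + d) mod c = (h + u + d) mod c"
    by (rule mod_add_left_eq)
  also have "h + u + d = h + d + u" by simp
  finally have "((h + u) mod c + d) mod c = (h + d + u) mod c" .
  then have "h + d = b"
    using b assms by (intro mod_add_cancel_less[of "h + d" u c b]) auto
  then show False using assms b by auto
qed

lemma rotate_set_reaches_top:
  assumes "y \<in> rotate_set c u (insert h A)" "A \<subseteq> {..<h}" "y \<noteq> (h + u) mod c"
  obtains d where "1 \<le> d" "d \<le> h" "(y + d) mod c = (h + u) mod c"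
proof -
  obtain b where b: "b \<in> A" "y = (b + u) mod c"
    using assms(1,3) unfolding rotate_set_def by auto
  have "(y + (h - b)) mod c = (b + u + (h - b)) mod c"
    unfolding b(2) by (simp add: mod_add_left_eq)
  also have "b + u + (h - b) = h + u" using b assms(2) by auto
  finally show ?thesis using that[of "h - b"] b assms(2) by auto
qed

lemma inj_on_rotate_set_insert:
  assumes c: "2 * h < c"
  shows "inj_on (\<lambda>(u, A). rotate_set c u (insert h A)) ({..<c} \<times> Pow {..<h})"
proof (rule inj_onI, clarsimp)
  fix u u' A A'
  assume u: "u < c" "u' < c" and A: "A \<subseteq> {..<h}" "A' \<subseteq> {..<h}"
    and eq: "rotate_set c u (insert h A) = rotate_set c u' (insert h A')"
  have tops: "(h + u) mod c = (h + u') mod c"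
  proof (rule ccontr)
    assume neq: "(h + u) mod c \<noteq> (h + u') mod c"
    have "(h + u') mod c \<in> rotate_set c u (insert h A)"
      using top_mem_rotate_set[of h u' c A'] eq by simp
    then obtain d where d: "1 \<le> d" "d \<le> h" "((h + u') mod c + d) mod c = (h + u) mod c"
      using rotate_set_reaches_top[OF _ A(1) neq[symmetric]] by blast
    have "(h + u) mod c \<in> rotate_set c u' (insert h A')"
      using top_mem_rotate_set[of h u c A] eq by simp
    then show False
      using rotate_set_gap_after_top[OF c A(2) d(1,2), of u'] d(3) by simp
  qed
  then have "u = u'"
    using u mod_add_cancel_less[of u h c u'] by (simp add: add.commute)
  moreover have "insert h A = insert h A'"
  proof -
    have "inj_on (\<lambda>b. (b + u) mod c) {..<c}"
      by (auto simp: inj_on_def intro: mod_add_cancel_less)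
    moreover have "insert h A \<subseteq> {..<c}" "insert h A' \<subseteq> {..<c}"
      using A c by auto
    moreover have "(\<lambda>b. (b + u) mod c) ` insert h A = (\<lambda>b. (b + u) mod c) ` insert h A'"
      using eq \<open>u = u'\<close> unfolding rotate_set_def by simp
    ultimately show ?thesis by (simp only: inj_on_image_eq_iff)
  qed
  moreover have "h \<notin> A" "h \<notin> A'" using A by auto
  ultimately show "u = u' \<and> A = A'" by (metis insert_ident)
qed

lemma sum_rotations_hitting_le:
  fixes a c r :: nat
  shows "(\<Sum>u<c. of_bool ((a + u) mod c = r)) \<le> (1::nat)"
proof -
  have "card ({..<c} \<inter> {u. (a + u) mod c = r}) \<le> Suc 0"
    by (rule card_le_Suc0_iff_eq[THEN iffD2]) (auto simp: add.commute dest: mod_add_cancel_less[OF sym])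
  then show ?thesis by simp
qed

section \<open>The code list\<close>

definition gray_block :: "nat \<Rightarrow> nat \<Rightarrow> nat \<Rightarrow> nat set list" where
  "gray_block c h u = map (\<lambda>A. rotate_set c u (insert h A)) (gray_code h)"

definition code_list :: "nat \<Rightarrow> nat \<Rightarrow> nat set list" where
  "code_list c h = {} # concat (map (gray_block c h) [0..<c])"

lemma concat_gray_blocks:
  "concat (map (gray_block c h) [0..<c]) =
    map (\<lambda>(u, A). rotate_set c u (insert h A)) (List.product [0..<c] (gray_code h))"
  unfolding gray_block_def [abs_def] by (simp add: product_concat_map map_concat comp_def)

lemma length_code_list: "length (code_list c h) = c * 2 ^ h + 1"
  by (simp add: code_list_def concat_gray_blocks)

lemma code_list_nth_0: "code_list c h ! 0 = {}"
  by (simp add: code_list_def)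

lemma set_code_list:
  "set (code_list c h) = insert {} ((\<lambda>(u, A). rotate_set c u (insert h A)) ` ({..<c} \<times> set (gray_code h)))"
  by (auto simp: code_list_def concat_gray_blocks)

lemma code_list_subset: "X \<in> set (code_list c h) \<Longrightarrow> 0 < c \<Longrightarrow> X \<subseteq> {..<c}"
  using rotate_set_subset by (auto simp: set_code_list)

lemma card_code_list_le:
  assumes "X \<in> set (code_list c h)"
  shows "card X \<le> h + 1"
proof -
  consider "X = {}" | u A where "A \<in> set (gray_code h)" "X = rotate_set c u (insert h A)"
    using assms by (auto simp: set_code_list)
  then show ?thesis
  proof cases
    case 2
    have A: "insert h A \<subseteq> {..h}"
      using gray_code_subset[OF 2(1)] by auto
    have "card X \<le> card (insert h A)"
      unfolding 2(2) rotate_set_def by (rule card_image_le) (use A finite_subset in auto)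
    also have "\<dots> \<le> card {..h}"
      using A by (rule card_mono[rotated]) simp
    finally show ?thesis by simp
  qed simp
qed

lemma distinct_code_list:
  assumes "2 * h < c"
  shows "distinct (code_list c h)"
proof -
  let ?g = "\<lambda>(u, A). rotate_set c u (insert h A)"
  have "inj_on ?g (set (List.product [0..<c] (gray_code h)))"
    by (rule inj_on_subset[OF inj_on_rotate_set_insert[OF assms]]) (auto dest: gray_code_subset)
  then have "distinct (map ?g (List.product [0..<c] (gray_code h)))"
    by (simp add: distinct_map distinct_product distinct_gray_code)
  moreover have "{} \<notin> set (map ?g (List.product [0..<c] (gray_code h)))"
    using top_mem_rotate_set by fastforce
  ultimately show ?thesis
    by (simp add: code_list_def concat_gray_blocks)
qed

text \<open>A descent at the junction of two consecutive blocks needs \<open>p\<close> on the last element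
  of the earlier block, which is charged to that block.\<close>

lemma descents_Cons_concat_le:
  assumes "\<forall>u<t. f u \<noteq> []"
  shows "descents p (x # concat (map f [0..<t])) + of_bool (p (last (x # concat (map f [0..<t]))))
    \<le> of_bool (p x) + (\<Sum>u<t. descents p (f u) + of_bool (p (last (f u))))"
  using assms
proof (induction t)
  case (Suc t)
  let ?xs = "x # concat (map f [0..<t])"
  have "descents p (?xs @ f t) = descents p ?xs + of_bool (p (last ?xs) \<and> \<not> p (hd (f t))) + descents p (f t)"
    using Suc.prems by (intro descents_append) auto
  moreover have "last (?xs @ f t) = last (f t)"
    using Suc.prems by simp
  ultimately have "descents p (?xs @ f t) + of_bool (p (last (?xs @ f t)))
      \<le> (descents p ?xs + of_bool (p (last ?xs))) + (descents p (f t) + of_bool (p (last (f t))))"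
    by (simp only:) auto
  also have "\<dots> \<le> of_bool (p x) + (\<Sum>u<t. descents p (f u) + of_bool (p (last (f u))))
      + (descents p (f t) + of_bool (p (last (f t))))"
    using Suc by (intro add_right_mono) auto
  finally show ?case
    by (simp add: ac_simps)
qed simp

lemma last_gray_code_subset: "last (gray_code n) \<subseteq> {n - 1}"
  by (cases n) (simp, simp only: last_gray_code, simp)

lemma descents_gray_block_le:
  assumes c: "2 * h < c" and r: "r < c" and u: "u < c"
  shows "descents (\<lambda>A. r \<in> A) (gray_block c h u)
    \<le> (\<Sum>j<h. of_bool ((j + u) mod c = r) * descents (\<lambda>A. j \<in> A) (gray_code h))"
proof -
  define j0 where "j0 = (r + c - u) mod c"
  have "descents (\<lambda>A. r \<in> A) (gray_block c h u) = descents (\<lambda>A. j0 \<in> insert h A) (gray_code h)"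
    unfolding gray_block_def descents_map
  proof (rule descents_cong)
    fix A assume "A \<in> set (gray_code h)"
    then have "insert h A \<subseteq> {..<c}"
      using gray_code_subset c by fastforce
    then show "((\<lambda>A. r \<in> A) \<circ> (\<lambda>A. rotate_set c u (insert h A))) A = (j0 \<in> insert h A)"
      using mem_rotate_set_iff[OF _ r u] unfolding j0_def by simp
  qed
  also have "\<dots> \<le> (\<Sum>j<h. of_bool ((j + u) mod c = r) * descents (\<lambda>A. j \<in> A) (gray_code h))"
  proof (cases "j0 < h")
    case True
    have "(j0 + u) mod c = r"
      using rotate_eq_iff[of j0 c r u] True c r u unfolding j0_def by auto
    then have "descents (\<lambda>A. j0 \<in> A) (gray_code h)
        = of_bool ((j0 + u) mod c = r) * descents (\<lambda>A. j0 \<in> A) (gray_code h)"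
      by simp
    also have "\<dots> \<le> (\<Sum>j<h. of_bool ((j + u) mod c = r) * descents (\<lambda>A. j \<in> A) (gray_code h))"
      by (rule member_le_sum[of j0 "{..<h}" "\<lambda>j. of_bool ((j + u) mod c = r) * descents (\<lambda>A. j \<in> A) (gray_code h)"])
        (use True in auto)
    finally have "descents (\<lambda>A. j0 \<in> A) (gray_code h)
        \<le> (\<Sum>j<h. of_bool ((j + u) mod c = r) * descents (\<lambda>A. j \<in> A) (gray_code h))" .
    moreover have "descents (\<lambda>A. j0 \<in> insert h A) (gray_code h) = descents (\<lambda>A. j0 \<in> A) (gray_code h)"
      using True by (intro descents_cong) auto
    ultimately show ?thesis by simp
  next
    case False
    have "descents (\<lambda>A. j0 \<in> insert h A) (gray_code h) = descents (\<lambda>_. j0 = h) (gray_code h)"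
      using False gray_code_subset by (intro descents_cong) fastforce
    then show ?thesis by simp
  qed
  finally show ?thesis .
qed

lemma descents_code_list_le:
  assumes c: "2 * h < c" and r: "r < c"
  shows "descents (\<lambda>A. r \<in> A) (code_list c h) \<le> 2 ^ (h - 1) + 1"
proof -
  let ?D = "\<lambda>j. descents (\<lambda>A. j \<in> A) (gray_code h)"
  let ?hit = "\<lambda>a u. of_bool ((a + u) mod c = r) :: nat"
  have "\<forall>u<c. gray_block c h u \<noteq> []"
    by (simp add: gray_block_def)
  then have "descents (\<lambda>A. r \<in> A) (code_list c h)
      \<le> (\<Sum>u<c. descents (\<lambda>A. r \<in> A) (gray_block c h u) + of_bool (r \<in> last (gray_block c h u)))"
    using descents_Cons_concat_le[of c "gray_block c h" "\<lambda>A. r \<in> A" "{}"]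
    unfolding code_list_def by simp
  also have "\<dots> \<le> (\<Sum>u<c. (\<Sum>j<h. ?hit j u * ?D j) + (?hit h u + ?hit (h - 1) u))"
  proof (rule sum_mono)
    fix u assume u: "u \<in> {..<c}"
    have "last (gray_block c h u) = rotate_set c u (insert h (last (gray_code h)))"
      by (simp add: gray_block_def last_map)
    then have "of_bool (r \<in> last (gray_block c h u)) \<le> ?hit h u + ?hit (h - 1) u"
      using last_gray_code_subset[of h] unfolding rotate_set_def by auto
    then show "descents (\<lambda>A. r \<in> A) (gray_block c h u) + of_bool (r \<in> last (gray_block c h u))
        \<le> (\<Sum>j<h. ?hit j u * ?D j) + (?hit h u + ?hit (h - 1) u)"
      using descents_gray_block_le[OF c r] u by (intro add_mono) auto
  qed
  also have "\<dots> = (\<Sum>j<h. (\<Sum>u<c. ?hit j u) * ?D j) + ((\<Sum>u<c. ?hit h u) + (\<Sum>u<c. ?hit (h - 1) u))"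
    by (simp only: sum.distrib sum_distrib_right sum.swap[of _ "{..<c}"])
  also have "\<dots> \<le> (\<Sum>j<h. ?D j) + (1 + 1)"
    using sum_rotations_hitting_le[of _ c r] by (intro add_mono sum_mono mult_left_le_one_le) auto
  also have "\<dots> = 2 ^ (h - 1) + 1"
    using sum_descents_gray_code[of h] by simp
  finally show ?thesis .
qed

section \<open>Antiperiodic bit sequences and window sums\<close>

definition antiperiodic_ext :: "nat \<Rightarrow> (nat \<Rightarrow> bool) \<Rightarrow> nat \<Rightarrow> bool" where
  "antiperiodic_ext L f k = (if even (k div L) then f (k mod L) else \<not> f (k mod L))"

lemma antiperiodic_ext_add: "0 < L \<Longrightarrow> antiperiodic_ext L f (k + L) = (\<not> antiperiodic_ext L f k)"
  by (simp add: antiperiodic_ext_def div_add_self2)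

lemma antiperiodic_ext_less: "k < L \<Longrightarrow> antiperiodic_ext L f k = f k"
  by (simp add: antiperiodic_ext_def)

lemma div_parity_differs_if_mod_eq:
  fixes i j L :: nat
  assumes "i mod L = j mod L" "i \<noteq> j" "i < j + 2 * L" "j < i + 2 * L"
  shows "even (i div L) \<noteq> even (j div L)"
proof -
  define a b where "a = i div L" and "b = j div L"
  have i: "i = a * L + i mod L"
    unfolding a_def by simp
  have j: "j = b * L + i mod L"
    using assms(1) div_mult_mod_eq[of j L] unfolding b_def by simp
  have "a * L < (b + 2) * L" "b * L < (a + 2) * L"
    using assms(3,4) i j by (simp_all add: algebra_simps)
  then have "a < b + 2" "b < a + 2"
    using mult_less_cancel2 by blast+
  moreover have "a \<noteq> b"
    using assms(2) i j by auto
  ultimately have "a = b + 1 \<or> b = a + 1" by linarith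
  then show ?thesis unfolding a_def[symmetric] b_def[symmetric] by auto
qed

lemma antiperiodic_ext_separates:
  fixes xs :: "nat set list"
  assumes distinct: "distinct xs" and L: "length xs = L"
    and small: "\<And>X. X \<in> set xs \<Longrightarrow> X \<subseteq> {..<c} \<and> 2 * card X < c"
    and ij: "i \<noteq> j" "i < j + 2 * L" "j < i + 2 * L"
  shows "\<exists>r<c. antiperiodic_ext L (\<lambda>q. r \<in> xs ! q) i \<noteq> antiperiodic_ext L (\<lambda>q. r \<in> xs ! q) j"
proof -
  have "0 < L" using ij by linarith
  define X Y where "X = xs ! (i mod L)" and "Y = xs ! (j mod L)"
  have XY: "X \<in> set xs" "Y \<in> set xs"
    using \<open>0 < L\<close> L unfolding X_def Y_def by simp_all
  then have sub: "X \<subseteq> {..<c}" "Y \<subseteq> {..<c}" and card: "card X + card Y < c"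
    using small[OF XY(1)] small[OF XY(2)] by linarith+
  have bit: "antiperiodic_ext L (\<lambda>q. r \<in> xs ! q) i = (if even (i div L) then r \<in> X else r \<notin> X)"
    "antiperiodic_ext L (\<lambda>q. r \<in> xs ! q) j = (if even (j div L) then r \<in> Y else r \<notin> Y)" for r
    unfolding antiperiodic_ext_def X_def Y_def by simp_all
  show ?thesis
  proof (cases "i mod L = j mod L")
    case True
    then have "X = Y" unfolding X_def Y_def by simp
    moreover have "0 < c" using card by simp
    ultimately show ?thesis
      using div_parity_differs_if_mod_eq[OF True ij] bit[of 0] by auto
  next
    case False
    then have "X \<noteq> Y"
      using distinct \<open>0 < L\<close> L unfolding X_def Y_def by (simp add: nth_eq_iff_index_eq)
    show ?thesis
    proof (cases "even (i div L) = even (j div L)")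
      case True
      obtain r where "r \<in> X \<longleftrightarrow> r \<notin> Y" using \<open>X \<noteq> Y\<close> by blast
      then show ?thesis using True sub bit by (metis lessThan_iff subsetD)
    next
      case False
      have "card (X \<union> Y) < card {..<c}"
        using card card_Un_le[of X Y] by simp
      then obtain r where "r < c" "r \<notin> X \<union> Y"
        by (metis lessThan_iff psubsetI subsetI card_mono finite_lessThan less_le_not_le Un_subset_iff sub)
      then show ?thesis using False bit by auto
    qed
  qed
qed

lemma antiperiodic_parity:
  fixes b :: "nat \<Rightarrow> bool" and L y q :: nat
  assumes "\<And>x. b (x + L) = (\<not> b x)"
  shows "b (y + q * L) = (b y \<noteq> odd q)"
proof (induction q)
  case (Suc q)
  then show ?case using assms[of "y + q * L"] by (simp add: ac_simps)
qed simp

lemma card_ascents_eq: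
  "card {y. y < n \<and> \<not> b y \<and> b (Suc y)} + of_bool (b 0) = card {y. y < n \<and> b y \<and> \<not> b (Suc y)} + of_bool (b n)"
proof (induction n)
  case (Suc n)
  have split: "{y. y < Suc n \<and> P y} = (if P n then insert n {y. y < n \<and> P y} else {y. y < n \<and> P y})" for P
    by (auto simp: less_Suc_eq)
  show ?case using Suc by (simp only: split) (auto simp: card_insert_if)
qed simp

lemma window_sum_shift:
  fixes s f :: "nat \<Rightarrow> nat"
  assumes "\<And>i. s (i + L) + f i = s i + f (Suc i)"
  shows "(\<Sum>d<L. s (i + d)) + f 0 = (\<Sum>d<L. s d) + f i"
proof (induction i)
  case (Suc i)
  have "(\<Sum>d<L. s (Suc i + d)) + s i = (\<Sum>d<L. s (i + d)) + s (i + L)"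
    using sum.lessThan_Suc_shift[of "\<lambda>d. s (i + d)" L] by simp
  then show ?case using Suc assms[of i] by simp
qed simp

text \<open>The sequence \<open>s\<close> places a one at every descent of \<open>b\<close> in even periods, at every
  ascent in odd periods, and at a fixed set \<open>P\<close> of non-transitions, so that
  \<open>s (i + L) - s i = b (i + 1) - b i\<close>; the window sums then follow \<open>b\<close>.\<close>

lemma antiperiodic_window_sums:
  fixes b :: "nat \<Rightarrow> bool" and L V :: nat
  assumes anti: "\<And>x. b (x + L) = (\<not> b x)" and L: "0 < L"
    and descents: "card {y. y < L \<and> b y \<and> \<not> b (Suc y)} \<le> V + of_bool (b 0)"
    and room: "V + of_bool (b 0) + card {y. y < L \<and> \<not> b y \<and> b (Suc y)} \<le> L"
  shows "\<exists>s. (\<forall>x. s x \<le> (1::nat)) \<and> (\<forall>i. (\<Sum>d<L. s (i + d)) = V + of_bool (b i))"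
proof -
  define DN where "DN = {y. y < L \<and> b y \<and> \<not> b (Suc y)}"
  define UP where "UP = {y. y < L \<and> \<not> b y \<and> b (Suc y)}"
  define NC where "NC = {..<L} - (DN \<union> UP)"
  have "DN \<union> UP \<subseteq> {..<L}" "DN \<inter> UP = {}" "finite DN" "finite UP"
    unfolding DN_def UP_def by auto
  then have "card NC = L - (card DN + card UP)"
    unfolding NC_def by (simp add: card_Diff_subset card_Un_disjoint)
  moreover have "V + of_bool (b 0) + card UP \<le> L"
    using room unfolding UP_def .
  ultimately have "V + of_bool (b 0) - card DN \<le> card NC"
    by linarith
  then obtain P where P: "P \<subseteq> NC" "card P = V + of_bool (b 0) - card DN"
    by (meson obtain_subset_with_card_n)
  define s :: "nat \<Rightarrow> nat" where
    "s x = (if even (x div L) then of_bool (x mod L \<in> DN \<union> P) else of_bool (x mod L \<in> UP \<union> P))" for x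
  have shift: "s (i + L) + of_bool (b i) = s i + of_bool (b (Suc i))" for i
  proof -
    define y q where "y = i mod L" and "q = i div L"
    have y: "y < L" unfolding y_def using L by simp
    have "b i = (b y \<noteq> odd q)" "b (Suc i) = (b (Suc y) \<noteq> odd q)"
      using antiperiodic_parity[of b L, OF anti, of y q] antiperiodic_parity[of b L, OF anti, of "Suc y" q]
      unfolding y_def q_def by simp_all
    moreover have "s i = (if even q then of_bool (y \<in> DN \<union> P) else of_bool (y \<in> UP \<union> P))"
      "s (i + L) = (if odd q then of_bool (y \<in> DN \<union> P) else of_bool (y \<in> UP \<union> P))"
      unfolding s_def y_def q_def using L by (simp_all add: div_add_self2)
    moreover have "y \<in> P \<Longrightarrow> b y = b (Suc y)" "y \<notin> DN \<or> y \<notin> UP"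
      using P(1) unfolding NC_def DN_def UP_def by auto
    moreover have "y \<in> DN \<longleftrightarrow> b y \<and> \<not> b (Suc y)" "y \<in> UP \<longleftrightarrow> \<not> b y \<and> b (Suc y)"
      using y unfolding DN_def UP_def by simp_all
    ultimately show ?thesis
      by (cases "even q"; cases "b y"; cases "b (Suc y)"; cases "y \<in> P") simp_all
  qed
  define Q where "Q = DN \<union> P"
  have "(\<Sum>d<L. s d) = (\<Sum>d<L. of_bool (d \<in> Q))"
    by (rule sum.cong) (simp_all add: s_def Q_def)
  also have "\<dots> = card ({..<L} \<inter> Q)"
    using sum_of_bool_eq[OF finite_lessThan, of L "\<lambda>d. d \<in> Q", where 'a = nat] by simp
  also have "{..<L} \<inter> Q = DN \<union> P"
    using P(1) unfolding Q_def DN_def NC_def by auto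
  also have "card (DN \<union> P) = card DN + card P"
    using P(1) \<open>finite DN\<close> finite_subset[OF P(1)] unfolding NC_def
    by (intro card_Un_disjoint) auto
  also have "\<dots> = V + of_bool (b 0)"
    using P(2) descents unfolding DN_def by simp
  finally have "(\<Sum>d<L. s d) = V + of_bool (b 0)" .
  then have "\<forall>i. (\<Sum>d<L. s (i + d)) = V + of_bool (b i)"
    using window_sum_shift[of s L "\<lambda>i. of_bool (b i)", OF shift] by simp
  moreover have "\<forall>x. s x \<le> 1" unfolding s_def by simp
  ultimately show ?thesis by blast
qed

section \<open>The burst-separating matrix\<close>

text \<open>Row \<open>r\<close> of the matrix has window sum \<open>V + 1\<close> at burst head \<open>i\<close> exactly when
  \<open>code_bit c h r i\<close> holds.\<close>

definition code_bit :: "nat \<Rightarrow> nat \<Rightarrow> nat \<Rightarrow> nat \<Rightarrow> bool" where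
  "code_bit c h r = antiperiodic_ext (c * 2 ^ h + 1) (\<lambda>q. r \<in> code_list c h ! q)"

lemma code_bits_separate:
  assumes "2 * (h + 1) < c" "i \<noteq> j" "i < j + 2 * (c * 2 ^ h + 1)" "j < i + 2 * (c * 2 ^ h + 1)"
  shows "\<exists>r<c. code_bit c h r i \<noteq> code_bit c h r j"
proof -
  have "X \<subseteq> {..<c} \<and> 2 * card X < c" if "X \<in> set (code_list c h)" for X
    using code_list_subset[OF that] card_code_list_le[OF that] assms(1) by fastforce
  then show ?thesis
    unfolding code_bit_def
    using antiperiodic_ext_separates[OF distinct_code_list length_code_list _ assms(2-4)] assms(1)
    by simp
qed

lemma descents_code_bit_le:
  assumes c: "2 * h < c" and r: "r < c"
  shows "card {y. y < c * 2 ^ h + 1 \<and> code_bit c h r y \<and> \<not> code_bit c h r (Suc y)} \<le> 2 ^ (h - 1) + 1"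
proof -
  define L where "L = c * 2 ^ h + 1"
  define xs where "xs = code_list c h @ [{..<c}]"
  have len: "length (code_list c h) = L"
    unfolding L_def by (rule length_code_list)
  define f where "f q = (r \<in> code_list c h ! q)" for q
  have bit: "code_bit c h r = antiperiodic_ext L f"
    unfolding code_bit_def L_def f_def ..
  have "\<not> antiperiodic_ext L f 0"
    using antiperiodic_ext_less[of 0 L f] unfolding L_def f_def by (simp add: code_list_nth_0)
  then have "antiperiodic_ext L f L"
    using antiperiodic_ext_add[of L f 0] unfolding L_def by simp
  then have bits: "code_bit c h r y = (r \<in> xs ! y)" if "y \<le> L" for y
    using that len r unfolding bit xs_def f_def
    by (cases "y < L") (auto simp: antiperiodic_ext_less nth_append code_list_nth_0)
  have "{y. y < L \<and> code_bit c h r y \<and> \<not> code_bit c h r (Suc y)}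
      = {y. Suc y < length xs \<and> r \<in> xs ! y \<and> r \<notin> xs ! Suc y}"
    using len bits unfolding xs_def by auto
  also have "card \<dots> = descents (\<lambda>A. r \<in> A) xs"
    by (rule descents_conv_card[symmetric])
  also have "\<dots> = descents (\<lambda>A. r \<in> A) (code_list c h)"
    unfolding xs_def using r by (subst descents_append) (simp_all add: code_list_def)
  also have "\<dots> \<le> 2 ^ (h - 1) + 1"
    by (rule descents_code_list_le[OF c r])
  finally show ?thesis unfolding L_def .
qed

lemma code_bit_window_sums:
  assumes h: "1 \<le> h" and c: "2 * (h + 1) < c"
  shows "\<exists>R. \<forall>r<c. (\<forall>k. R r k \<le> (1::nat)) \<and>
    (\<forall>i. (\<Sum>d<c * 2 ^ h + 1. R r (i + d)) = 2 ^ (h - 1) + 1 + of_bool (code_bit c h r i))"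
proof -
  define L where "L = c * 2 ^ h + 1"
  define V where "V = (2::nat) ^ (h - 1) + 1"
  have row: "\<exists>s. (\<forall>k. s k \<le> (1::nat)) \<and> (\<forall>i. (\<Sum>d<L. s (i + d)) = V + of_bool (code_bit c h r i))"
    if r: "r < c" for r
  proof (rule antiperiodic_window_sums)
    show anti: "code_bit c h r (x + L) = (\<not> code_bit c h r x)" for x
      unfolding code_bit_def L_def by (rule antiperiodic_ext_add) simp
    have start: "\<not> code_bit c h r 0"
      unfolding code_bit_def by (simp add: antiperiodic_ext_less code_list_nth_0)
    have descents: "card {y. y < L \<and> code_bit c h r y \<and> \<not> code_bit c h r (Suc y)} \<le> V"
      unfolding L_def V_def using descents_code_bit_le[OF _ r] c by simp
    then show "card {y. y < L \<and> code_bit c h r y \<and> \<not> code_bit c h r (Suc y)} \<le> V + of_bool (code_bit c h r 0)"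
      by simp
    obtain m where m: "h = Suc m" using h by (cases h) auto
    have "2 * V + 1 = 2 ^ h + 3"
      unfolding V_def m by simp
    also have "\<dots> \<le> 3 * 2 ^ h + 1"
      by simp
    also have "\<dots> \<le> L"
      using c unfolding L_def by simp
    finally have "2 * V + 1 \<le> L" .
    then show "V + of_bool (code_bit c h r 0) + card {y. y < L \<and> \<not> code_bit c h r y \<and> code_bit c h r (Suc y)} \<le> L"
      using card_ascents_eq[of L "code_bit c h r"] anti[of 0] start descents by simp
  qed (simp add: L_def)
  then have "\<forall>r. \<exists>s. r < c \<longrightarrow> (\<forall>k. s k \<le> (1::nat)) \<and> (\<forall>i. (\<Sum>d<L. s (i + d)) = V + of_bool (code_bit c h r i))"
    by blast
  then show ?thesis
    unfolding L_def V_def by metis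
qed

lemma nth_matvec_burst:
  assumes "r < c" "i + L \<le> n"
  shows "matvec c n R (burst n L i) ! r = (\<Sum>d<L. R r (i + d))"
proof -
  have "matvec c n R (burst n L i) ! r = (\<Sum>k<n. R r k * burst n L i k)"
    using assms(1) by (simp add: matvec_def)
  also have "\<dots> = (\<Sum>k\<in>{i..<i + L}. R r k)"
    using assms(2) by (intro sum.mono_neutral_cong_right) (auto simp: burst_def)
  also have "(\<Sum>k\<in>{i..<i + L}. R r k) = (\<Sum>d<L. R r (i + d))"
    by (simp add: sum.atLeastLessThan_shift_0 atLeast0LessThan add.commute)
  finally show ?thesis .
qed

lemma sqgt_less_across_last:
  assumes "eta \<noteq> []" "y1 < last eta" "last eta \<le> y2"
  shows "sqgt eta y1 < sqgt eta y2"
proof -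
  let ?A = "\<lambda>y. {k. k < length eta \<and> eta ! k \<le> y}"
  have "?A y1 \<subseteq> ?A y2" "length eta - 1 \<in> ?A y2 - ?A y1"
    using assms by (auto simp: last_conv_nth)
  then have "?A y1 \<subset> ?A y2" by blast
  then show ?thesis
    unfolding sqgt_def by (rule psubset_card_mono[rotated]) simp
qed

theorem mainTheorem7:
  fixes c h n :: nat
  assumes "c > 2 * (h + 1)"
    and "n \<ge> c * 2 ^ h + 1"
  shows "\<exists>R :: nat \<Rightarrow> nat \<Rightarrow> nat.
           (\<forall>r<c. \<forall>k<n. R r k \<le> 1) \<and>
           (\<forall>eta :: nat list.
              eta \<noteq> [] \<and> sorted_wrt (<) eta \<and> (\<forall>x\<in>set eta. 0 < x) \<and>
              2 * last eta = 2 ^ h + 4 \<longrightarrow>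
              (\<forall>i j. i \<le> n - (c * 2 ^ h + 1) \<and> j \<le> n - (c * 2 ^ h + 1) \<and>
                     i \<noteq> j \<and> i < j + 2 * (c * 2 ^ h + 1) \<and> j < i + 2 * (c * 2 ^ h + 1) \<longrightarrow>
                 sqgt_vec eta (matvec c n R (burst n (c * 2 ^ h + 1) i)) \<noteq>
                 sqgt_vec eta (matvec c n R (burst n (c * 2 ^ h + 1) j))))"
proof (cases "h = 0")
  case True
  then have "2 * x \<noteq> 2 ^ h + 4" for x :: nat
    by simp presburger
  then show ?thesis
    by (intro exI[of _ "\<lambda>_ _. 0"]) auto
next
  case False
  define L where "L = c * 2 ^ h + 1"
  define V where "V = (2::nat) ^ (h - 1) + 1"
  obtain R where R: "\<And>r. r < c \<Longrightarrow> (\<forall>k. R r k \<le> 1) \<and>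
      (\<forall>i. (\<Sum>d<L. R r (i + d)) = V + of_bool (code_bit c h r i))"
    using code_bit_window_sums[of h c] False assms(1) unfolding L_def V_def by auto
  show ?thesis
  proof (intro exI[of _ R] conjI allI impI)
    fix eta :: "nat list" and i j
    assume eta: "eta \<noteq> [] \<and> sorted_wrt (<) eta \<and> (\<forall>x\<in>set eta. 0 < x) \<and> 2 * last eta = 2 ^ h + 4"
      and ij: "i \<le> n - (c * 2 ^ h + 1) \<and> j \<le> n - (c * 2 ^ h + 1) \<and>
        i \<noteq> j \<and> i < j + 2 * (c * 2 ^ h + 1) \<and> j < i + 2 * (c * 2 ^ h + 1)"
    obtain r where r: "r < c" "code_bit c h r i \<noteq> code_bit c h r j"
      using code_bits_separate[OF assms(1)] ij by blast
    have entry: "matvec c n R (burst n L k) ! r = V + of_bool (code_bit c h r k)" if "k \<le> n - L" for k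
      using nth_matvec_burst[OF r(1), of k L n R] R[OF r(1)] that assms(2) unfolding L_def by simp
    have "last eta = V + 1"
      using eta False unfolding V_def by (cases h) auto
    then have "sqgt eta V \<noteq> sqgt eta (V + 1)"
      using sqgt_less_across_last[of eta V "V + 1"] eta by simp
    moreover have "matvec c n R (burst n L i) ! r = V + of_bool (code_bit c h r i)"
      "matvec c n R (burst n L j) ! r = V + of_bool (code_bit c h r j)"
      using entry ij unfolding L_def by simp_all
    ultimately have neq: "sqgt eta (matvec c n R (burst n L i) ! r) \<noteq> sqgt eta (matvec c n R (burst n L j) ! r)"
      using r(2) by (cases "code_bit c h r i") auto
    show "sqgt_vec eta (matvec c n R (burst n (c * 2 ^ h + 1) i)) \<noteq>
        sqgt_vec eta (matvec c n R (burst n (c * 2 ^ h + 1) j))"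
    proof
      assume "sqgt_vec eta (matvec c n R (burst n (c * 2 ^ h + 1) i)) =
          sqgt_vec eta (matvec c n R (burst n (c * 2 ^ h + 1) j))"
      then have "sqgt_vec eta (matvec c n R (burst n L i)) ! r = sqgt_vec eta (matvec c n R (burst n L j)) ! r"
        unfolding L_def by simp
      then show False
        using neq r(1) unfolding sqgt_vec_def by (simp add: matvec_def)
    qed
  qed (use R in blast)
qed

end
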